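(* Let $\|\cdot\|$ be a strictly convex norm on $\mathbb{R}^n$ that is continuously differentiable on $\mathbb{R}^n\setminus\{0\}$, with gradient $N(x)$ at $x\ne0$, and set $h(x,y)=\|y\|-\langle y,N(x)\rangle$ for $x\neq 0$, and $h(0,z)=0$ for all $z$. Suppose $\|\cdot\|$ is geometrically convex with constants $r>0$, $\Lambda>2$, i.e. $$\Lambda\, h(x,x+y)\le h(x,x+2y)\quad\text{for all } x\neq0,\ \|y\|\le r\|x\|.$$ Then for all $x\neq 0$ and $\|y\|\le r\|x\|$, $$h(x,x+2y)\le \frac{\Lambda}{\Lambda-2}\,h(x+2y,x).$$ Equivalently, if $x\ne0$ and $\|z-x\|\le 2r\|x\|$, then $h(x,z)\le \frac{\Lambda}{\Lambda-2}h(z,x)$.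
   Context: $\langle\cdot,\cdot\rangle$ is the Euclidean inner product. Strict convexity of the norm means: if $x,y\neq0$ and $\|x+y\|=\|x\|+\|y\|$, then $y=\alpha x$ for some $\alpha>0$. *)

theory Defs
  imports "HOL-Analysis.Analysis"
begin

definition is_norm :: "(real^'n \<Rightarrow> real) \<Rightarrow> bool" where
  "is_norm nrm \<longleftrightarrow>
     (\<forall>x. 0 \<le> nrm x) \<and> (\<forall>x. nrm x = 0 \<longleftrightarrow> x = 0) \<and>
     (\<forall>c x. nrm (c *\<^sub>R x) = \<bar>c\<bar> * nrm x) \<and>
     (\<forall>x y. nrm (x + y) \<le> nrm x + nrm y)"

definition strictly_convex_norm :: "(real^'n \<Rightarrow> real) \<Rightarrow> bool" where
  "strictly_convex_norm nrm \<longleftrightarrow> is_norm nrm \<and>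
     (\<forall>x y. x \<noteq> 0 \<longrightarrow> y \<noteq> 0 \<longrightarrow> nrm (x + y) = nrm x + nrm y \<longrightarrow>
        (\<exists>\<alpha>>0. y = \<alpha> *\<^sub>R x))"

definition hfun :: "(real^'n \<Rightarrow> real) \<Rightarrow> (real^'n \<Rightarrow> real^'n) \<Rightarrow> real^'n \<Rightarrow> real^'n \<Rightarrow> real" where
  "hfun nrm N x y = (if x = 0 then 0 else nrm y - y \<bullet> N x)"

end

theory Submission
  imports Defs
begin

text \<open>
  Since the norm is convex, its gradient N z is a
  subgradient, which forces z \<bullet> N z = \<parallel>z\<parallel> and v \<bullet> N z \<le> \<parallel>v\<parallel>. With z = x + 2y these give
  h(x,z) - 2 h(x,x+y) = \<parallel>z\<parallel> + \<parallel>x\<parallel> - \<parallel>x+z\<parallel> \<le> h(z,x), and combining this with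
  \<Lambda> h(x,x+y) \<le> h(x,z) yields (\<Lambda> - 2) h(x,z) \<le> \<Lambda> h(z,x).
\<close>

lemma is_norm_convex_on:
  assumes "is_norm nrm"
  shows "convex_on UNIV nrm"
proof (rule convex_onI)
  fix t :: real and u v assume "0 < t" "t < 1"
  moreover have "nrm ((1 - t) *\<^sub>R u + t *\<^sub>R v) \<le> nrm ((1 - t) *\<^sub>R u) + nrm (t *\<^sub>R v)"
    using assms unfolding is_norm_def by blast
  ultimately show "nrm ((1 - t) *\<^sub>R u + t *\<^sub>R v) \<le> (1 - t) * nrm u + t * nrm v"
    using assms unfolding is_norm_def by simp
qed simp

lemma convex_on_above_tangent:
  fixes f :: "'a::real_normed_vector \<Rightarrow> real"
  assumes convex: "convex_on UNIV f" and deriv: "(f has_derivative f') (at z)"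
  shows "f z + f' v \<le> f (z + v)"
proof -
  define g where "g t = f (z + t *\<^sub>R v)" for t :: real
  have g_convex: "convex_on UNIV g"
  proof (rule convex_onI)
    fix t a b :: real assume "0 < t" "t < 1"
    have "z + ((1 - t) * a + t * b) *\<^sub>R v = (1 - t) *\<^sub>R (z + a *\<^sub>R v) + t *\<^sub>R (z + b *\<^sub>R v)"
      by (simp add: algebra_simps)
    then show "g ((1 - t) *\<^sub>R a + t *\<^sub>R b) \<le> (1 - t) * g a + t * g b"
      unfolding g_def using convex_onD[OF convex, of t] \<open>0 < t\<close> \<open>t < 1\<close> by simp
  qed simp
  have "((\<lambda>t. z + t *\<^sub>R v) has_derivative (\<lambda>t. t *\<^sub>R v)) (at 0)"
    by (auto intro!: derivative_eq_intros)
  moreover have "(f has_derivative f') (at (z + 0 *\<^sub>R v))"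
    using deriv by simp
  ultimately have "(g has_derivative (\<lambda>t. f' (t *\<^sub>R v))) (at 0)"
    unfolding g_def by (rule has_derivative_compose)
  moreover have "(\<lambda>t. f' (t *\<^sub>R v)) = (*) (f' v)"
    using linear_scale[OF has_derivative_linear[OF deriv]] by (auto simp: fun_eq_iff)
  ultimately have "(g has_field_derivative f' v) (at 0)"
    by (simp add: has_field_derivative_def)
  then have "g 1 - g 0 \<ge> f' v * (1 - 0)"
    using convex_on_imp_above_tangent[OF g_convex, of 0 1] by simp
  then show ?thesis by (simp add: g_def)
qed

lemma norm_gradient_le:
  assumes "is_norm nrm" and "(nrm has_derivative (\<lambda>v. v \<bullet> g)) (at z)"
  shows "v \<bullet> g \<le> nrm v"
proof -
  have "nrm (z + v) \<le> nrm z + nrm v" using \<open>is_norm nrm\<close> unfolding is_norm_def by blast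
  with convex_on_above_tangent[OF is_norm_convex_on[OF assms(1)] assms(2), of v] show ?thesis
    by simp
qed

lemma norm_gradient_self:
  assumes "is_norm nrm" and "(nrm has_derivative (\<lambda>v. v \<bullet> g)) (at z)"
  shows "z \<bullet> g = nrm z"
proof -
  have "nrm 0 = 0" using \<open>is_norm nrm\<close> unfolding is_norm_def by simp
  then have "nrm z \<le> z \<bullet> g"
    using convex_on_above_tangent[OF is_norm_convex_on[OF assms(1)] assms(2), of "- z"] by simp
  with norm_gradient_le[OF assms] show ?thesis by (simp add: antisym)
qed

lemma hfun_double_le:
  fixes nrm :: "real^'n \<Rightarrow> real"
  assumes norm: "is_norm nrm"
    and grad: "\<And>x. x \<noteq> 0 \<Longrightarrow> (nrm has_derivative (\<lambda>v. v \<bullet> N x)) (at x)"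
    and "x \<noteq> 0"
  shows "hfun nrm N x (x + 2 *\<^sub>R y) - 2 * hfun nrm N x (x + y) \<le> hfun nrm N (x + 2 *\<^sub>R y) x"
proof -
  define z where "z = x + 2 *\<^sub>R y"
  have hom: "\<And>c u. nrm (c *\<^sub>R u) = \<bar>c\<bar> * nrm u" using norm unfolding is_norm_def by blast
  have x_self: "x \<bullet> N x = nrm x" by (rule norm_gradient_self[OF norm grad[OF \<open>x \<noteq> 0\<close>]])
  have "x + z = 2 *\<^sub>R (x + y)"
    by (simp only: z_def scaleR_add_right scaleR_2 add_ac)
  then have "2 * hfun nrm N x (x + y) = nrm (x + z) - (x + z) \<bullet> N x"
    using hom[of 2 "x + y"] \<open>x \<noteq> 0\<close> by (simp add: hfun_def right_diff_distrib)
  then have lhs: "hfun nrm N x z - 2 * hfun nrm N x (x + y) = nrm z + nrm x - nrm (x + z)"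
    using \<open>x \<noteq> 0\<close> x_self by (simp add: hfun_def inner_add_left)
  show ?thesis
  proof (cases "z = 0")
    case True
    moreover have "nrm 0 = 0" using norm unfolding is_norm_def by blast
    ultimately show ?thesis using lhs by (simp add: hfun_def z_def[symmetric])
  next
    case False
    have "(x + z) \<bullet> N z \<le> nrm (x + z)" "z \<bullet> N z = nrm z"
      using norm_gradient_le[OF norm grad] norm_gradient_self[OF norm grad] False by auto
    then show ?thesis
      using lhs False by (simp add: hfun_def z_def[symmetric] inner_add_left)
  qed
qed

theorem lemma4p10:
  fixes nrm :: "real^'n \<Rightarrow> real" and N :: "real^'n \<Rightarrow> real^'n" and r \<Lambda> :: real
  assumes sc: "strictly_convex_norm nrm"
    and grad: "\<And>x. x \<noteq> 0 \<Longrightarrow> (nrm has_derivative (\<lambda>v. v \<bullet> N x)) (at x)"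
    and C1: "continuous_on (- {0}) N"
    and r: "r > 0" and Lam: "\<Lambda> > 2"
    and geo: "\<And>x y. x \<noteq> 0 \<Longrightarrow> nrm y \<le> r * nrm x \<Longrightarrow>
                \<Lambda> * hfun nrm N x (x + y) \<le> hfun nrm N x (x + 2 *\<^sub>R y)"
    and x: "x \<noteq> 0" and y: "nrm y \<le> r * nrm x"
  shows "hfun nrm N x (x + 2 *\<^sub>R y) \<le> \<Lambda> / (\<Lambda> - 2) * hfun nrm N (x + 2 *\<^sub>R y) x"
proof -
  define A where "A = hfun nrm N x (x + 2 *\<^sub>R y)"
  define B where "B = hfun nrm N (x + 2 *\<^sub>R y) x"
  define c where "c = hfun nrm N x (x + y)"
  have "is_norm nrm" using sc unfolding strictly_convex_norm_def by blast
  then have "A - 2 * c \<le> B"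
    unfolding A_def B_def c_def by (rule hfun_double_le[OF _ grad x])
  then have "\<Lambda> * (A - 2 * c) \<le> \<Lambda> * B" using Lam by (intro mult_left_mono) auto
  moreover have "\<Lambda> * c \<le> A" using geo[OF x y] by (simp add: A_def c_def)
  ultimately have "(\<Lambda> - 2) * A \<le> \<Lambda> * B" by (simp add: algebra_simps)
  then show ?thesis using Lam by (simp add: A_def B_def field_simps)
qed

end
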